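(* Let $\mathcal E_i\equiv1\to H_i\xrightarrow{\alpha_i}G_i\xrightarrow{\beta_i}K_i\to1$ ($i=1,2$) be central extensions of multiplicative Lie algebras that are isoclinic via $(\lambda,\mu)$. Then: (1) $\lambda(\beta_1(x))=\beta_2(\mu(x))$ for all $x\in{}^M[G_1,G_1]$; (2) $\mu({}^M[x,g_1])={}^M[\mu(x),g_2]$ for all $x\in{}^M[G_1,G_1]$, $g_1\in G_1$ and $g_2\in G_2$ with $\lambda(\beta_1(g_1))=\beta_2(g_2)$, where ${}^M[a,b]:=(a\star b)[a,b]$; (3) $\mu(\alpha_1(H_1)\cap{}^M[G_1,G_1])=\alpha_2(H_2)\cap{}^M[G_2,G_2]$.
   Context: A multiplicative Lie algebra is a group $(G,\cdot)$ with a binary operation $\star$ such that for all $x,y,z\in G$: $x\star x=1$; $x\star(yz)=(x\star y)\,{}^y(x\star z)$; $(xy)\star z={}^x(y\star z)(x\star z)$; $((x\star y)\star{}^yz)((y\star z)\star{}^zx)((z\star x)\star{}^xy)=1$; ${}^z(x\star y)={}^zx\star{}^zy$, where ${}^xy=xyx^{-1}$. $Z(G)$ is the group center, $LZ(G)=\{x: x\star y=1\ \forall y\}$, $\mathcal Z(G)=LZ(G)\cap Z(G)$; $[x,y]$ is the group commutator; ${}^M[G,G]=(G\star G)[G,G]$ with $G\star G$ the ideal generated by all $a\star b$. A central extension is a short exact sequence $1\to H\xrightarrow{\alpha}G\xrightarrow{\beta}K\to1$ of multiplicative Lie algebras with $\alpha(H)\subseteq\mathcal Z(G)$. Central extensions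 $\mathcal E_1,\mathcal E_2$ are isoclinic via $(\lambda,\mu)$ if $\lambda:K_1\to K_2$, $\mu:{}^M[G_1,G_1]\to{}^M[G_2,G_2]$ are multiplicative Lie algebra isomorphisms with $\mu([g,g'])=[h,h']$ and $\mu(g\star g')=h\star h'$ whenever $g,g'\in G_1$, $h,h'\in G_2$ satisfy $\beta_2(h)=\lambda\beta_1(g)$, $\beta_2(h')=\lambda\beta_1(g')$. *)

theory Defs
  imports "HOL-Algebra.Algebra"
begin

record 'a mla = "'a monoid" + star :: "'a \<Rightarrow> 'a \<Rightarrow> 'a"

definition conjg :: "('a, 'b) monoid_scheme \<Rightarrow> 'a \<Rightarrow> 'a \<Rightarrow> 'a" where
  "conjg G x y = x \<otimes>\<^bsub>G\<^esub> y \<otimes>\<^bsub>G\<^esub> inv\<^bsub>G\<^esub> x"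

text \<open>Group commutator [x,y] = x y x^-1 y^-1 (same convention as HOL-Algebra's derived subgroup).\<close>
definition gcomm :: "('a, 'b) monoid_scheme \<Rightarrow> 'a \<Rightarrow> 'a \<Rightarrow> 'a" where
  "gcomm G x y = x \<otimes>\<^bsub>G\<^esub> y \<otimes>\<^bsub>G\<^esub> inv\<^bsub>G\<^esub> x \<otimes>\<^bsub>G\<^esub> inv\<^bsub>G\<^esub> y"

definition mult_lie_alg :: "('a, 'b) mla_scheme \<Rightarrow> bool" where
  "mult_lie_alg G \<longleftrightarrow> group G \<and>
     (\<forall>x\<in>carrier G. \<forall>y\<in>carrier G. star G x y \<in> carrier G) \<and>
     (\<forall>x\<in>carrier G. star G x x = \<one>\<^bsub>G\<^esub>) \<and>
     (\<forall>x\<in>carrier G. \<forall>y\<in>carrier G. \<forall>z\<in>carrier G.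
        star G x (y \<otimes>\<^bsub>G\<^esub> z) = star G x y \<otimes>\<^bsub>G\<^esub> conjg G y (star G x z)) \<and>
     (\<forall>x\<in>carrier G. \<forall>y\<in>carrier G. \<forall>z\<in>carrier G.
        star G (x \<otimes>\<^bsub>G\<^esub> y) z = conjg G x (star G y z) \<otimes>\<^bsub>G\<^esub> star G x z) \<and>
     (\<forall>x\<in>carrier G. \<forall>y\<in>carrier G. \<forall>z\<in>carrier G.
        star G (star G x y) (conjg G y z) \<otimes>\<^bsub>G\<^esub> star G (star G y z) (conjg G z x)
          \<otimes>\<^bsub>G\<^esub> star G (star G z x) (conjg G x y) = \<one>\<^bsub>G\<^esub>) \<and>
     (\<forall>x\<in>carrier G. \<forall>y\<in>carrier G. \<forall>z\<in>carrier G.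
        conjg G z (star G x y) = star G (conjg G z x) (conjg G z y))"

definition mla_hom :: "('a, 'c) mla_scheme \<Rightarrow> ('b, 'd) mla_scheme \<Rightarrow> ('a \<Rightarrow> 'b) \<Rightarrow> bool" where
  "mla_hom G K f \<longleftrightarrow> f \<in> hom G K \<and>
     (\<forall>x\<in>carrier G. \<forall>y\<in>carrier G. f (star G x y) = star K (f x) (f y))"

definition mla_iso :: "('a, 'c) mla_scheme \<Rightarrow> ('b, 'd) mla_scheme \<Rightarrow> ('a \<Rightarrow> 'b) \<Rightarrow> bool" where
  "mla_iso G K f \<longleftrightarrow> mla_hom G K f \<and> bij_betw f (carrier G) (carrier K)"

definition mla_ideal :: "('a, 'b) mla_scheme \<Rightarrow> 'a set \<Rightarrow> bool" where
  "mla_ideal G I \<longleftrightarrow> I \<lhd> G \<and> (\<forall>g\<in>carrier G. \<forall>h\<in>I. star G g h \<in> I)"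

definition star_ideal :: "('a, 'b) mla_scheme \<Rightarrow> 'a set" where
  "star_ideal G = \<Inter>{I. mla_ideal G I \<and>
      (\<forall>a\<in>carrier G. \<forall>b\<in>carrier G. star G a b \<in> I)}"

definition Mcomm_sub :: "('a, 'b) mla_scheme \<Rightarrow> 'a set" where
  "Mcomm_sub G = star_ideal G <#>\<^bsub>G\<^esub> derived G (carrier G)"

definition Mcomm_alg :: "('a, 'b) mla_scheme \<Rightarrow> ('a, 'b) mla_scheme" where
  "Mcomm_alg G = G\<lparr>carrier := Mcomm_sub G\<rparr>"

definition Mbr :: "('a, 'b) mla_scheme \<Rightarrow> 'a \<Rightarrow> 'a \<Rightarrow> 'a" where
  "Mbr G a b = star G a b \<otimes>\<^bsub>G\<^esub> gcomm G a b"

definition lie_center :: "('a, 'b) mla_scheme \<Rightarrow> 'a set" where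
  "lie_center G = {x \<in> carrier G. \<forall>y\<in>carrier G. star G x y = \<one>\<^bsub>G\<^esub>}"

definition group_center :: "('a, 'b) monoid_scheme \<Rightarrow> 'a set" where
  "group_center G = {x \<in> carrier G. \<forall>y\<in>carrier G. x \<otimes>\<^bsub>G\<^esub> y = y \<otimes>\<^bsub>G\<^esub> x}"

definition mla_center :: "('a, 'b) mla_scheme \<Rightarrow> 'a set" where
  "mla_center G = lie_center G \<inter> group_center G"

definition central_extension ::
  "('h, 'x) mla_scheme \<Rightarrow> ('g, 'y) mla_scheme \<Rightarrow> ('k, 'z) mla_scheme
    \<Rightarrow> ('h \<Rightarrow> 'g) \<Rightarrow> ('g \<Rightarrow> 'k) \<Rightarrow> bool" where
  "central_extension H G K \<alpha> \<beta> \<longleftrightarrow>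
     mult_lie_alg H \<and> mult_lie_alg G \<and> mult_lie_alg K \<and>
     mla_hom H G \<alpha> \<and> mla_hom G K \<beta> \<and>
     inj_on \<alpha> (carrier H) \<and>
     \<alpha> ` carrier H = {g \<in> carrier G. \<beta> g = \<one>\<^bsub>K\<^esub>} \<and>
     \<beta> ` carrier G = carrier K \<and>
     \<alpha> ` carrier H \<subseteq> mla_center G"

definition isoclinic_via ::
  "('h1, 'x1) mla_scheme \<Rightarrow> ('g1, 'y1) mla_scheme \<Rightarrow> ('k1, 'z1) mla_scheme
    \<Rightarrow> ('h1 \<Rightarrow> 'g1) \<Rightarrow> ('g1 \<Rightarrow> 'k1) \<Rightarrow>
   ('h2, 'x2) mla_scheme \<Rightarrow> ('g2, 'y2) mla_scheme \<Rightarrow> ('k2, 'z2) mla_scheme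
    \<Rightarrow> ('h2 \<Rightarrow> 'g2) \<Rightarrow> ('g2 \<Rightarrow> 'k2) \<Rightarrow>
   ('k1 \<Rightarrow> 'k2) \<Rightarrow> ('g1 \<Rightarrow> 'g2) \<Rightarrow> bool" where
  "isoclinic_via H1 G1 K1 \<alpha>1 \<beta>1 H2 G2 K2 \<alpha>2 \<beta>2 \<Lambda> \<mu> \<longleftrightarrow>
     central_extension H1 G1 K1 \<alpha>1 \<beta>1 \<and> central_extension H2 G2 K2 \<alpha>2 \<beta>2 \<and>
     mla_iso K1 K2 \<Lambda> \<and> mla_iso (Mcomm_alg G1) (Mcomm_alg G2) \<mu> \<and>
     (\<forall>g\<in>carrier G1. \<forall>g'\<in>carrier G1. \<forall>h\<in>carrier G2. \<forall>h'\<in>carrier G2.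
        \<beta>2 h = \<Lambda> (\<beta>1 g) \<longrightarrow> \<beta>2 h' = \<Lambda> (\<beta>1 g') \<longrightarrow>
        \<mu> (gcomm G1 g g') = gcomm G2 h h' \<and> \<mu> (star G1 g g') = star G2 h h')"

end

theory Submission
  imports Defs
begin

(* Two homomorphisms that agree on a set of generators agree on the subgroup they generate.
   The ideal G star G is the normal subgroup generated by the elements a star b (that subgroup
   is already closed under x star -), so the subgroup M[G1,G1] is generated by all g star g'
   and all commutators [g,g']. On these generators lambda o beta1 and beta2 o mu agree: if h, h'
   lift lambda (beta1 g) and lambda (beta1 g'), isoclinism gives mu (g star g') = h star h',
   whose image under beta2 is lambda (beta1 (g star g')); likewise for [g,g'].
   By (1), for x in M[G1,G1] the element mu x lies over lambda (beta1 x), so isoclinism applied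
   to the pair (x, g1) with lifts (mu x, g2) yields (2). Finally lambda is injective, so by (1) the bijection
   mu maps ker beta1 = alpha1 (H1) onto ker beta2 = alpha2 (H2) within M[G1,G1] and M[G2,G2],
   which is (3). *)

lemma mult_lie_alg_group: "mult_lie_alg G \<Longrightarrow> group G"
  unfolding mult_lie_alg_def by blast

lemma mult_lie_alg_star_closed:
  "\<lbrakk>mult_lie_alg G; x \<in> carrier G; y \<in> carrier G\<rbrakk> \<Longrightarrow> star G x y \<in> carrier G"
  unfolding mult_lie_alg_def by blast

lemma mult_lie_alg_star_mult_right:
  "\<lbrakk>mult_lie_alg G; x \<in> carrier G; y \<in> carrier G; z \<in> carrier G\<rbrakk>
   \<Longrightarrow> star G x (y \<otimes>\<^bsub>G\<^esub> z) = star G x y \<otimes>\<^bsub>G\<^esub> conjg G y (star G x z)"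
  unfolding mult_lie_alg_def by blast

lemma mult_lie_alg_conjg_star:
  "\<lbrakk>mult_lie_alg G; x \<in> carrier G; y \<in> carrier G; z \<in> carrier G\<rbrakk>
   \<Longrightarrow> conjg G z (star G x y) = star G (conjg G z x) (conjg G z y)"
  unfolding mult_lie_alg_def by blast

lemma (in group) conjg_closed [simp]:
  "\<lbrakk>x \<in> carrier G; y \<in> carrier G\<rbrakk> \<Longrightarrow> conjg G x y \<in> carrier G"
  unfolding conjg_def by simp

lemma (in group) conjg_one [simp]: "y \<in> carrier G \<Longrightarrow> conjg G \<one> y = y"
  unfolding conjg_def by simp

lemma (in group) conjg_inv_conjg:
  "\<lbrakk>s \<in> carrier G; y \<in> carrier G\<rbrakk> \<Longrightarrow> conjg G (inv s) (conjg G s y) = y"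
  unfolding conjg_def by (simp add: m_assoc, simp flip: m_assoc)

lemma mult_lie_alg_star_one_right:
  fixes G :: "('a, 'b) mla_scheme" (structure)
  assumes "mult_lie_alg G" "x \<in> carrier G"
  shows "star G x \<one>\<^bsub>G\<^esub> = \<one>\<^bsub>G\<^esub>"
proof -
  interpret group G using assms(1) by (rule mult_lie_alg_group)
  let ?a = "star G x \<one>"
  have a: "?a \<in> carrier G" by (rule mult_lie_alg_star_closed[OF assms one_closed])
  have "star G x (\<one> \<otimes> \<one>) = ?a \<otimes> conjg G \<one> ?a"
    by (rule mult_lie_alg_star_mult_right[OF assms one_closed one_closed])
  then have "?a = ?a \<otimes> ?a"
    by (simp only: l_one[OF one_closed] conjg_one[OF a])
  then show ?thesis using l_cancel_one'[OF a a] by blast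
qed

lemma mult_lie_alg_star_inv_right:
  fixes G :: "('a, 'b) mla_scheme" (structure)
  assumes "mult_lie_alg G" "x \<in> carrier G" "s \<in> carrier G"
  shows "star G x (inv\<^bsub>G\<^esub> s) = conjg G (inv\<^bsub>G\<^esub> s) (inv\<^bsub>G\<^esub> (star G x s))"
proof -
  interpret group G using assms(1) by (rule mult_lie_alg_group)
  let ?a = "star G x s" and ?b = "star G x (inv s)"
  have a: "?a \<in> carrier G" and b: "?b \<in> carrier G"
    using mult_lie_alg_star_closed[OF assms(1,2)] assms(3) by simp_all
  have "?a \<otimes> conjg G s ?b = star G x (s \<otimes> inv s)"
    using mult_lie_alg_star_mult_right[OF assms inv_closed[OF assms(3)]] by simp
  also have "\<dots> = \<one>"
    using mult_lie_alg_star_one_right[OF assms(1,2)] assms(3) by simp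
  finally have "inv ?a = conjg G s ?b"
    using a b assms(3) by (simp add: inv_equality inv_comm)
  then show ?thesis
    using conjg_inv_conjg[OF assms(3) b] by simp
qed

definition stars :: "('a, 'b) mla_scheme \<Rightarrow> 'a set" where
  "stars G = {star G a b | a b. a \<in> carrier G \<and> b \<in> carrier G}"

lemma star_in_stars: "\<lbrakk>a \<in> carrier G; b \<in> carrier G\<rbrakk> \<Longrightarrow> star G a b \<in> stars G"
  unfolding stars_def by blast

lemma stars_subset_carrier: "mult_lie_alg G \<Longrightarrow> stars G \<subseteq> carrier G"
  unfolding stars_def by (auto simp: mult_lie_alg_star_closed)

lemma generate_stars_normal:
  fixes G :: "('a, 'b) mla_scheme" (structure)
  assumes "mult_lie_alg G"
  shows "generate G (stars G) \<lhd> G"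
proof -
  interpret group G using assms by (rule mult_lie_alg_group)
  show ?thesis
  proof (rule normal_generateI[OF stars_subset_carrier[OF assms]])
    fix h g assume "h \<in> stars G" and g: "g \<in> carrier G"
    then obtain a b where ab: "a \<in> carrier G" "b \<in> carrier G" and h: "h = star G a b"
      unfolding stars_def by blast
    have "g \<otimes> h \<otimes> inv g = star G (conjg G g a) (conjg G g b)"
      using mult_lie_alg_conjg_star[OF assms ab g] unfolding h conjg_def .
    then show "g \<otimes> h \<otimes> inv g \<in> stars G"
      unfolding stars_def using ab g by (blast intro: conjg_closed)
  qed
qed

lemma generate_stars_star_closed:
  fixes G :: "('a, 'b) mla_scheme" (structure)
  assumes "mult_lie_alg G" "g \<in> carrier G" "h \<in> generate G (stars G)"
  shows "star G g h \<in> generate G (stars G)"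
proof -
  interpret group G using assms(1) by (rule mult_lie_alg_group)
  have N: "generate G (stars G) \<lhd> G" by (rule generate_stars_normal[OF assms(1)])
  have S: "stars G \<subseteq> carrier G" by (rule stars_subset_carrier[OF assms(1)])
  have star_in: "star G g h \<in> generate G (stars G)" if "h \<in> stars G" for h
    using that S by (blast intro: generate.incl star_in_stars[OF assms(2)])
  from assms(3) show ?thesis
  proof (induction h rule: generate.induct)
    case one
    show ?case using mult_lie_alg_star_one_right[OF assms(1,2)] generate.one by simp
  next
    case (incl h)
    then show ?case by (rule star_in)
  next
    case (inv h)
    then have h: "h \<in> carrier G" using S by blast
    have "inv (star G g h) \<in> generate G (stars G)"
      using star_in[OF inv] normal_imp_subgroup[OF N] by (rule subgroup.m_inv_closed[rotated])
    then show ?case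
      unfolding mult_lie_alg_star_inv_right[OF assms(1,2) h] conjg_def inv_inv[OF h]
      by (rule normal.inv_op_closed1[OF N h])
  next
    case (eng h1 h2)
    have h12: "h1 \<in> carrier G" "h2 \<in> carrier G"
      using eng.hyps generate_in_carrier[OF S] by blast+
    have "conjg G h1 (star G g h2) \<in> generate G (stars G)"
      unfolding conjg_def by (rule normal.inv_op_closed2[OF N h12(1) eng.IH(2)])
    then show ?case
      unfolding mult_lie_alg_star_mult_right[OF assms(1,2) h12]
      by (rule subgroup.m_closed[OF normal_imp_subgroup[OF N] eng.IH(1)])
  qed
qed

lemma star_ideal_eq_generate_stars:
  assumes "mult_lie_alg G"
  shows "star_ideal G = generate G (stars G)"
proof (rule antisym)
  have "mla_ideal G (generate G (stars G))"
    unfolding mla_ideal_def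
    using generate_stars_normal[OF assms] generate_stars_star_closed[OF assms] by blast
  then show "star_ideal G \<subseteq> generate G (stars G)"
    unfolding star_ideal_def by (blast intro: generate.incl star_in_stars)
next
  interpret group G using assms by (rule mult_lie_alg_group)
  show "generate G (stars G) \<subseteq> star_ideal G"
    unfolding star_ideal_def
  proof (rule Inter_greatest)
    fix I assume "I \<in> {I. mla_ideal G I \<and> (\<forall>a\<in>carrier G. \<forall>b\<in>carrier G. star G a b \<in> I)}"
    then have "stars G \<subseteq> I" "subgroup I G"
      unfolding mla_ideal_def stars_def by (auto intro: normal_imp_subgroup)
    then show "generate G (stars G) \<subseteq> I" by (rule generate_subgroup_incl)
  qed
qed

lemma Mcomm_sub_eq_generate:
  fixes G :: "('a, 'b) mla_scheme" (structure)
  assumes "mult_lie_alg G"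
  shows "Mcomm_sub G = generate G (stars G \<union> derived_set G (carrier G))"
    (is "_ = generate G ?X")
proof -
  interpret group G using assms by (rule mult_lie_alg_group)
  have S: "stars G \<subseteq> carrier G" by (rule stars_subset_carrier[OF assms])
  have D: "derived_set G (carrier G) \<subseteq> carrier G" by (rule derived_set_in_carrier) simp
  let ?N = "generate G (stars G)" and ?D = "derived G (carrier G)"
  have M: "Mcomm_sub G = ?N <#> ?D"
    unfolding Mcomm_sub_def star_ideal_eq_generate_stars[OF assms] ..
  show ?thesis
  proof (rule antisym)
    have "?N <#> ?D \<subseteq> generate G ?X <#> generate G ?X"
      unfolding derived_def by (intro mono_set_mult mono_generate Un_upper1 Un_upper2)
    also have "\<dots> = generate G ?X"
      using S D by (simp add: subgroup_mult_id generate_is_subgroup)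
    finally show "Mcomm_sub G \<subseteq> generate G ?X" unfolding M .
  next
    have sub: "subgroup (?N <#> ?D) G"
      using normal_subgroup_set_mult_closed[OF generate_stars_normal[OF assms]
          derived_self_is_normal]
      by (rule normal_imp_subgroup)
    have "x \<in> ?N <#> ?D" if "x \<in> ?X" for x
    proof (cases "x \<in> stars G")
      case True
      then have "x \<otimes> \<one> \<in> ?N <#> ?D"
        unfolding set_mult_def derived_def by (blast intro: generate.incl generate.one)
      then show ?thesis using True S by auto
    next
      case False
      then have "\<one> \<otimes> x \<in> ?N <#> ?D"
        using that unfolding set_mult_def derived_def by (blast intro: generate.incl generate.one)
      then show ?thesis using that S D by auto
    qed
    then have "?X \<subseteq> ?N <#> ?D" by blast
    then show "generate G ?X \<subseteq> Mcomm_sub G"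
      unfolding M using sub by (rule generate_subgroup_incl)
  qed
qed

lemma Mcomm_sub_subgroup:
  assumes "mult_lie_alg G"
  shows "subgroup (Mcomm_sub G) G"
proof -
  interpret group G using assms by (rule mult_lie_alg_group)
  show ?thesis
    unfolding Mcomm_sub_eq_generate[OF assms]
    using stars_subset_carrier[OF assms] derived_set_in_carrier[of "carrier G"]
    by (simp add: generate_is_subgroup)
qed

lemma star_in_Mcomm_sub:
  "\<lbrakk>mult_lie_alg G; a \<in> carrier G; b \<in> carrier G\<rbrakk> \<Longrightarrow> star G a b \<in> Mcomm_sub G"
  unfolding Mcomm_sub_eq_generate by (blast intro: generate.incl star_in_stars)

lemma gcomm_in_Mcomm_sub:
  "\<lbrakk>mult_lie_alg G; a \<in> carrier G; b \<in> carrier G\<rbrakk> \<Longrightarrow> gcomm G a b \<in> Mcomm_sub G"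
  unfolding Mcomm_sub_eq_generate gcomm_def by (blast intro: generate.incl)

lemma mla_hom_star:
  "\<lbrakk>mla_hom G K f; x \<in> carrier G; y \<in> carrier G\<rbrakk> \<Longrightarrow> f (star G x y) = star K (f x) (f y)"
  unfolding mla_hom_def by blast

lemma (in group_hom) hom_gcomm:
  "\<lbrakk>x \<in> carrier G; y \<in> carrier G\<rbrakk> \<Longrightarrow> h (gcomm G x y) = gcomm H (h x) (h y)"
  unfolding gcomm_def by simp

lemma hom_restrict_carrier: "\<lbrakk>f \<in> hom G K; S \<subseteq> carrier G\<rbrakk> \<Longrightarrow> f \<in> hom (G\<lparr>carrier := S\<rparr>) K"
  unfolding hom_def by auto

lemma (in group) subgroup_equalizer:
  assumes H: "subgroup H G" and "group K"
    and f: "f \<in> hom (G\<lparr>carrier := H\<rparr>) K" and g: "g \<in> hom (G\<lparr>carrier := H\<rparr>) K"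
  shows "subgroup {x \<in> H. f x = g x} G"
proof -
  have "group (G\<lparr>carrier := H\<rparr>)" using H by (rule subgroup_imp_group)
  then have f': "group_hom (G\<lparr>carrier := H\<rparr>) K f" and g': "group_hom (G\<lparr>carrier := H\<rparr>) K g"
    using \<open>group K\<close> f g by (simp_all add: group_hom_def group_hom_axioms_def)
  show ?thesis
  proof (rule subgroupI)
    show "{x \<in> H. f x = g x} \<subseteq> carrier G" using subgroup.subset[OF H] by blast
    show "{x \<in> H. f x = g x} \<noteq> {}"
      using group_hom.hom_one[OF f'] group_hom.hom_one[OF g'] subgroup.one_closed[OF H] by force
  next
    fix a assume "a \<in> {x \<in> H. f x = g x}"
    then show "inv a \<in> {x \<in> H. f x = g x}"
      using group_hom.hom_inv[OF f'] group_hom.hom_inv[OF g'] subgroup.m_inv_closed[OF H] H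
      by (simp add: m_inv_consistent)
  next
    fix a b assume "a \<in> {x \<in> H. f x = g x}" "b \<in> {x \<in> H. f x = g x}"
    then show "a \<otimes> b \<in> {x \<in> H. f x = g x}"
      using group_hom.hom_mult[OF f'] group_hom.hom_mult[OF g'] subgroup.m_closed[OF H] by simp
  qed
qed

locale isoclinism =
  fixes H1 :: "('h1, 'x1) mla_scheme" and G1 :: "('g1, 'y1) mla_scheme"
    and K1 :: "('k1, 'z1) mla_scheme"
    and H2 :: "('h2, 'x2) mla_scheme" and G2 :: "('g2, 'y2) mla_scheme"
    and K2 :: "('k2, 'z2) mla_scheme"
    and \<alpha>1 :: "'h1 \<Rightarrow> 'g1" and \<beta>1 :: "'g1 \<Rightarrow> 'k1"
    and \<alpha>2 :: "'h2 \<Rightarrow> 'g2" and \<beta>2 :: "'g2 \<Rightarrow> 'k2"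
    and \<Lambda> :: "'k1 \<Rightarrow> 'k2" and \<mu> :: "'g1 \<Rightarrow> 'g2"
  assumes isoclinic: "isoclinic_via H1 G1 K1 \<alpha>1 \<beta>1 H2 G2 K2 \<alpha>2 \<beta>2 \<Lambda> \<mu>"
begin

lemma central_extensions:
  "central_extension H1 G1 K1 \<alpha>1 \<beta>1" "central_extension H2 G2 K2 \<alpha>2 \<beta>2"
  using isoclinic unfolding isoclinic_via_def by blast+

lemma mult_lie_algs:
  "mult_lie_alg G1" "mult_lie_alg K1" "mult_lie_alg G2" "mult_lie_alg K2"
  using central_extensions unfolding central_extension_def by blast+

lemma mla_homs: "mla_hom G1 K1 \<beta>1" "mla_hom G2 K2 \<beta>2" "mla_hom K1 K2 \<Lambda>"
  using isoclinic unfolding isoclinic_via_def central_extension_def mla_iso_def by blast+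

sublocale \<beta>1: group_hom G1 K1 \<beta>1
  using mult_lie_algs mla_homs
  by (simp add: group_hom_def group_hom_axioms_def mult_lie_alg_group mla_hom_def)

sublocale \<beta>2: group_hom G2 K2 \<beta>2
  using mult_lie_algs mla_homs
  by (simp add: group_hom_def group_hom_axioms_def mult_lie_alg_group mla_hom_def)

sublocale \<Lambda>: group_hom K1 K2 \<Lambda>
  using mult_lie_algs mla_homs
  by (simp add: group_hom_def group_hom_axioms_def mult_lie_alg_group mla_hom_def)

lemma alpha_image_eq_kernel:
  "\<alpha>1 ` carrier H1 = {g \<in> carrier G1. \<beta>1 g = \<one>\<^bsub>K1\<^esub>}"
  "\<alpha>2 ` carrier H2 = {g \<in> carrier G2. \<beta>2 g = \<one>\<^bsub>K2\<^esub>}"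
  using central_extensions unfolding central_extension_def by blast+

lemma mu_on_lifts:
  assumes "g \<in> carrier G1" "g' \<in> carrier G1" "h \<in> carrier G2" "h' \<in> carrier G2"
    and "\<beta>2 h = \<Lambda> (\<beta>1 g)" "\<beta>2 h' = \<Lambda> (\<beta>1 g')"
  shows "\<mu> (gcomm G1 g g') = gcomm G2 h h'" "\<mu> (star G1 g g') = star G2 h h'"
  using isoclinic assms unfolding isoclinic_via_def by blast+

lemma mu_iso: "mla_iso (Mcomm_alg G1) (Mcomm_alg G2) \<mu>"
  using isoclinic unfolding isoclinic_via_def by blast

lemma mu_hom: "\<mu> \<in> hom (G1\<lparr>carrier := Mcomm_sub G1\<rparr>) (G2\<lparr>carrier := Mcomm_sub G2\<rparr>)"
  using mu_iso unfolding mla_iso_def mla_hom_def Mcomm_alg_def by blast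

lemma mu_bij: "bij_betw \<mu> (Mcomm_sub G1) (Mcomm_sub G2)"
  using mu_iso unfolding mla_iso_def Mcomm_alg_def by simp

lemma mu_mult:
  assumes "x \<in> Mcomm_sub G1" "y \<in> Mcomm_sub G1"
  shows "\<mu> (x \<otimes>\<^bsub>G1\<^esub> y) = \<mu> x \<otimes>\<^bsub>G2\<^esub> \<mu> y"
  using hom_mult[OF mu_hom, of x y] assms by simp

lemma mu_closed: "x \<in> Mcomm_sub G1 \<Longrightarrow> \<mu> x \<in> carrier G2"
  using bij_betw_apply[OF mu_bij]
    subgroup.mem_carrier[OF Mcomm_sub_subgroup[OF mult_lie_algs(3)]] by blast

lemma beta2_image: "\<beta>2 ` carrier G2 = carrier K2"
  using central_extensions(2) unfolding central_extension_def by (elim conjE) assumption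

lemma exists_lift:
  assumes "g \<in> carrier G1"
  obtains h where "h \<in> carrier G2" "\<beta>2 h = \<Lambda> (\<beta>1 g)"
proof -
  have "\<Lambda> (\<beta>1 g) \<in> \<beta>2 ` carrier G2"
    unfolding beta2_image using assms by simp
  then show ?thesis by (elim imageE) (rule that; simp)
qed

lemma Lambda_inj: "inj_on \<Lambda> (carrier K1)"
  using isoclinic unfolding isoclinic_via_def mla_iso_def bij_betw_def by (elim conjE)

lemma commutes_on_generators:
  assumes g: "g \<in> carrier G1" and g': "g' \<in> carrier G1"
  shows "\<Lambda> (\<beta>1 (star G1 g g')) = \<beta>2 (\<mu> (star G1 g g'))"
    and "\<Lambda> (\<beta>1 (gcomm G1 g g')) = \<beta>2 (\<mu> (gcomm G1 g g'))"
proof -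
  obtain h where h: "h \<in> carrier G2" "\<beta>2 h = \<Lambda> (\<beta>1 g)" using exists_lift[OF g] .
  obtain h' where h': "h' \<in> carrier G2" "\<beta>2 h' = \<Lambda> (\<beta>1 g')" using exists_lift[OF g'] .
  note mu_eqs = mu_on_lifts[OF g g' h(1) h'(1) h(2) h'(2)]
  have "\<Lambda> (\<beta>1 (star G1 g g')) = star K2 (\<Lambda> (\<beta>1 g)) (\<Lambda> (\<beta>1 g'))"
    using g g' by (simp add: mla_hom_star[OF mla_homs(1)] mla_hom_star[OF mla_homs(3)])
  also have "\<dots> = \<beta>2 (star G2 h h')"
    using h h' by (simp add: mla_hom_star[OF mla_homs(2)])
  finally show "\<Lambda> (\<beta>1 (star G1 g g')) = \<beta>2 (\<mu> (star G1 g g'))"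
    unfolding mu_eqs .
  have "\<Lambda> (\<beta>1 (gcomm G1 g g')) = gcomm K2 (\<Lambda> (\<beta>1 g)) (\<Lambda> (\<beta>1 g'))"
    using g g' by (simp add: \<beta>1.hom_gcomm \<Lambda>.hom_gcomm)
  also have "\<dots> = \<beta>2 (gcomm G2 h h')"
    using h h' by (simp add: \<beta>2.hom_gcomm)
  finally show "\<Lambda> (\<beta>1 (gcomm G1 g g')) = \<beta>2 (\<mu> (gcomm G1 g g'))"
    unfolding mu_eqs .
qed

lemma commutes_on_Mcomm_sub:
  assumes "x \<in> Mcomm_sub G1"
  shows "\<Lambda> (\<beta>1 x) = \<beta>2 (\<mu> x)"
proof -
  have G1: "group G1" by (rule mult_lie_alg_group[OF mult_lie_algs(1)])
  have M1: "subgroup (Mcomm_sub G1) G1" by (rule Mcomm_sub_subgroup[OF mult_lie_algs(1)])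
  have M2: "subgroup (Mcomm_sub G2) G2" by (rule Mcomm_sub_subgroup[OF mult_lie_algs(3)])
  let ?E = "{x \<in> Mcomm_sub G1. (\<Lambda> \<circ> \<beta>1) x = (\<beta>2 \<circ> \<mu>) x}"
  have "\<Lambda> \<circ> \<beta>1 \<in> hom (G1\<lparr>carrier := Mcomm_sub G1\<rparr>) K2"
    using hom_compose[OF \<beta>1.homh \<Lambda>.homh] subgroup.subset[OF M1] by (rule hom_restrict_carrier)
  moreover have "\<beta>2 \<circ> \<mu> \<in> hom (G1\<lparr>carrier := Mcomm_sub G1\<rparr>) K2"
    using mu_hom hom_restrict_carrier[OF \<beta>2.homh subgroup.subset[OF M2]] by (rule hom_compose)
  ultimately have E: "subgroup ?E G1"
    using group.subgroup_equalizer[OF G1 M1 mult_lie_alg_group[OF mult_lie_algs(4)]] by blast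
  have "stars G1 \<union> derived_set G1 (carrier G1) \<subseteq> ?E"
    using commutes_on_generators star_in_Mcomm_sub[OF mult_lie_algs(1)]
      gcomm_in_Mcomm_sub[OF mult_lie_algs(1)]
    unfolding stars_def gcomm_def by auto
  then have "generate G1 (stars G1 \<union> derived_set G1 (carrier G1)) \<subseteq> ?E"
    using E by (rule group.generate_subgroup_incl[OF G1])
  then show ?thesis
    using assms unfolding Mcomm_sub_eq_generate[OF mult_lie_algs(1)] by auto
qed

lemma mu_Mbr:
  assumes x: "x \<in> Mcomm_sub G1" and g1: "g1 \<in> carrier G1" and g2: "g2 \<in> carrier G2"
    and lift: "\<Lambda> (\<beta>1 g1) = \<beta>2 g2"
  shows "\<mu> (Mbr G1 x g1) = Mbr G2 (\<mu> x) g2"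
proof -
  have xc: "x \<in> carrier G1"
    by (rule subgroup.mem_carrier[OF Mcomm_sub_subgroup[OF mult_lie_algs(1)] x])
  note mu_eqs = mu_on_lifts[OF xc g1 mu_closed[OF x] g2
      commutes_on_Mcomm_sub[OF x, symmetric] lift[symmetric]]
  show ?thesis
    unfolding Mbr_def mu_eqs[symmetric]
    using star_in_Mcomm_sub[OF mult_lie_algs(1) xc g1] gcomm_in_Mcomm_sub[OF mult_lie_algs(1) xc g1]
    by (rule mu_mult)
qed

lemma mu_image_alpha_inter_Mcomm_sub:
  "\<mu> ` (\<alpha>1 ` carrier H1 \<inter> Mcomm_sub G1) = \<alpha>2 ` carrier H2 \<inter> Mcomm_sub G2"
proof -
  have M1: "Mcomm_sub G1 \<subseteq> carrier G1"
    by (rule subgroup.subset[OF Mcomm_sub_subgroup[OF mult_lie_algs(1)]])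
  have M2: "Mcomm_sub G2 \<subseteq> carrier G2"
    by (rule subgroup.subset[OF Mcomm_sub_subgroup[OF mult_lie_algs(3)]])
  have kernel_iff: "\<beta>2 (\<mu> x) = \<one>\<^bsub>K2\<^esub> \<longleftrightarrow> \<beta>1 x = \<one>\<^bsub>K1\<^esub>" if "x \<in> Mcomm_sub G1" for x
  proof -
    have "\<beta>2 (\<mu> x) = \<Lambda> (\<beta>1 x)" using commutes_on_Mcomm_sub[OF that] ..
    also have "\<dots> = \<Lambda> \<one>\<^bsub>K1\<^esub> \<longleftrightarrow> \<beta>1 x = \<one>\<^bsub>K1\<^esub>"
      using that M1 by (intro inj_on_eq_iff[OF Lambda_inj]) auto
    finally show ?thesis by simp
  qed
  have "\<alpha>1 ` carrier H1 \<inter> Mcomm_sub G1 = {x \<in> Mcomm_sub G1. \<beta>2 (\<mu> x) = \<one>\<^bsub>K2\<^esub>}"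
    unfolding alpha_image_eq_kernel(1) using M1 kernel_iff by auto
  moreover have "\<alpha>2 ` carrier H2 \<inter> Mcomm_sub G2 = {y \<in> \<mu> ` Mcomm_sub G1. \<beta>2 y = \<one>\<^bsub>K2\<^esub>}"
    unfolding alpha_image_eq_kernel(2) bij_betw_imp_surj_on[OF mu_bij] using M2 by auto
  ultimately show ?thesis by auto
qed

end

theorem lemma4p2:
  fixes H1 :: "('h1, 'x1) mla_scheme" and G1 :: "('g1, 'y1) mla_scheme"
    and K1 :: "('k1, 'z1) mla_scheme"
    and H2 :: "('h2, 'x2) mla_scheme" and G2 :: "('g2, 'y2) mla_scheme"
    and K2 :: "('k2, 'z2) mla_scheme"
    and \<alpha>1 :: "'h1 \<Rightarrow> 'g1" and \<beta>1 :: "'g1 \<Rightarrow> 'k1"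
    and \<alpha>2 :: "'h2 \<Rightarrow> 'g2" and \<beta>2 :: "'g2 \<Rightarrow> 'k2"
    and \<Lambda> :: "'k1 \<Rightarrow> 'k2" and \<mu> :: "'g1 \<Rightarrow> 'g2"
  assumes "isoclinic_via H1 G1 K1 \<alpha>1 \<beta>1 H2 G2 K2 \<alpha>2 \<beta>2 \<Lambda> \<mu>"
  shows "(\<forall>x\<in>Mcomm_sub G1. \<Lambda> (\<beta>1 x) = \<beta>2 (\<mu> x)) \<and>
         (\<forall>x\<in>Mcomm_sub G1. \<forall>g1\<in>carrier G1. \<forall>g2\<in>carrier G2.
            \<Lambda> (\<beta>1 g1) = \<beta>2 g2 \<longrightarrow> \<mu> (Mbr G1 x g1) = Mbr G2 (\<mu> x) g2) \<and>
         \<mu> ` (\<alpha>1 ` carrier H1 \<inter> Mcomm_sub G1) = \<alpha>2 ` carrier H2 \<inter> Mcomm_sub G2"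
proof -
  interpret isoclinism H1 G1 K1 H2 G2 K2 \<alpha>1 \<beta>1 \<alpha>2 \<beta>2 \<Lambda> \<mu>
    using assms by (rule isoclinism.intro)
  show ?thesis
    using commutes_on_Mcomm_sub mu_Mbr mu_image_alpha_inter_Mcomm_sub by simp
qed

end
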